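(* The set $\{S_1 : S\in\mathrm{OW}_n(\mathbb{C})\}$ of first slices of symmetric tensors in $\mathrm{OW}_n(\mathbb{C})$ is dense (in the Euclidean topology) in the space of complex symmetric $n\times n$ matrices.
   Context: For a symmetric tensor $S\in\mathbb{C}^{n\times n\times n}$ the first slice is $S_1=(S_{ij1})_{1\le i,j\le n}$. Tensors are identified with cubic forms $f=\sum_{i,j,k}S_{ijk}x_ix_jx_k$. $\mathrm{OW}_n(\mathbb{C})$ is the set of $f\in\mathbb{C}[x_1,\dots,x_n]_3$ that can be written $f(x)=g(Ax)$ with $A\in M_n(\mathbb{C})$, $A^TA=\mathrm{Id}$, and $g=\alpha_1x_1^3+\cdots+\alpha_nx_n^3$. *)

theory Defs
  imports "HOL-Analysis.Analysis"
begin

text \<open>Third-order tensors complex^n^n^n, indexed by a finite (well-ordered) type 'n;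
  S $ i $ j $ k is the entry S_{ijk}.\<close>

definition symmetric_tensor :: "complex ^ ('n::finite) ^ 'n ^ 'n \<Rightarrow> bool" where
  "symmetric_tensor S \<longleftrightarrow>
     (\<forall>i j k. S $ i $ j $ k = S $ j $ i $ k \<and> S $ i $ j $ k = S $ i $ k $ j)"

definition cubic_form :: "complex ^ ('n::finite) ^ 'n ^ 'n \<Rightarrow> complex ^ 'n \<Rightarrow> complex" where
  "cubic_form S x = (\<Sum>i\<in>UNIV. \<Sum>j\<in>UNIV. \<Sum>k\<in>UNIV. S $ i $ j $ k * x $ i * x $ j * x $ k)"

definition OW :: "(complex ^ ('n::finite) ^ 'n ^ 'n) set" where
  "OW = {S. symmetric_tensor S \<and>
           (\<exists>(A :: complex ^ 'n ^ 'n) (\<alpha> :: 'n \<Rightarrow> complex).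
              transpose A ** A = mat 1 \<and>
              (\<forall>x. cubic_form S x = (\<Sum>i\<in>UNIV. \<alpha> i * ((A *v x) $ i) ^ 3)))}"

text \<open>The first slice S_1 = (S_{ij1})_{i,j}; "1" is the least index of 'n.\<close>
definition first_slice :: "complex ^ ('n::{finite,wellorder}) ^ ('n::{finite,wellorder}) ^ ('n::{finite,wellorder}) \<Rightarrow> complex ^ ('n::{finite,wellorder}) ^ ('n::{finite,wellorder})" where
  "first_slice S = (\<chi> i j. S $ i $ j $ (LEAST k. True))"

end

theory Submission
  imports Defs "Jordan_Normal_Form.Jordan_Normal_Form" "Subresultants.Subresultant_Gcd"
    "HOL-Computational_Algebra.Field_as_Ring"
begin

text \<open>
  If \<open>A\<close> is complex orthogonal with rows \<open>a\<^sub>l\<close>, the tensor \<open>\<Sum>\<^sub>l \<beta>\<^sub>l a\<^sub>l \<otimes> a\<^sub>l \<otimes> a\<^sub>l\<close> lies in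
  \<open>OW\<^sub>n\<close> and its first slice is \<open>A\<^sup>T diag(\<beta>\<^sub>l a\<^sub>l\<^sub>1) A\<close>. So every matrix \<open>P\<^sup>T diag(\<lambda>) P\<close> with
  \<open>P\<close> complex orthogonal and no zero entry in its first column is a first slice.

  A complex symmetric matrix with \<open>n\<close> distinct eigenvalues, none of which is an eigenvalue of the
  submatrix obtained by deleting the first row and column, is of this form: eigenvectors for
  distinct eigenvalues are orthogonal for the bilinear form \<open>x\<^sup>T y\<close>, and being a basis they are
  not isotropic, so they can be normalised; an eigenvector with vanishing first coordinate would
  yield an eigenvalue of the submatrix. Both conditions say that a product of resultants, a
  polynomial in the entries, does not vanish. It holds for one symmetric matrix (built from a
  Householder reflection), hence on the line from that matrix to any symmetric \<open>M\<close> it fails only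
  at finitely many points, and so it holds arbitrarily close to \<open>M\<close>.
\<close>

section \<open>Eigenvectors in coordinates\<close>

lemma eigenvalue_iff_eigenvector_fun:
  fixes B :: "'a::comm_ring_1 mat"
  assumes B: "B \<in> carrier_mat n n"
  shows "eigenvalue B a \<longleftrightarrow> (\<exists>v. (\<forall>i<n. (\<Sum>j<n. B $$ (i,j) * v j) = a * v i) \<and> (\<exists>i<n. v i \<noteq> 0))"
proof
  assume "eigenvalue B a"
  then obtain v where v: "v \<in> carrier_vec n" "v \<noteq> 0\<^sub>v n" "B *\<^sub>v v = a \<cdot>\<^sub>v v"
    unfolding eigenvalue_def eigenvector_def using B by auto
  have "(\<Sum>j<n. B $$ (i,j) * v $ j) = a * v $ i" if "i < n" for i
  proof -
    have "(B *\<^sub>v v) $ i = (\<Sum>j<n. B $$ (i,j) * v $ j)"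
      using that B v(1) by (simp add: scalar_prod_def lessThan_atLeast0)
    then show ?thesis using v that by simp
  qed
  moreover have "\<exists>i<n. v $ i \<noteq> 0"
    using v(1,2) by (metis carrier_vecD eq_vecI index_zero_vec)
  ultimately show "\<exists>v. (\<forall>i<n. (\<Sum>j<n. B $$ (i,j) * v j) = a * v i) \<and> (\<exists>i<n. v i \<noteq> 0)"
    by blast
next
  assume "\<exists>v. (\<forall>i<n. (\<Sum>j<n. B $$ (i,j) * v j) = a * v i) \<and> (\<exists>i<n. v i \<noteq> 0)"
  then obtain v where eq: "\<forall>i<n. (\<Sum>j<n. B $$ (i,j) * v j) = a * v i" and nz: "\<exists>i<n. v i \<noteq> 0"
    by blast
  have "B *\<^sub>v vec n v = a \<cdot>\<^sub>v vec n v"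
    using B eq by (intro eq_vecI) (auto simp: scalar_prod_def lessThan_atLeast0)
  moreover have "vec n v \<noteq> 0\<^sub>v n" using nz by (auto simp: vec_eq_iff)
  ultimately show "eigenvalue B a"
    unfolding eigenvalue_def eigenvector_def using B by (intro exI[of _ "vec n v"]) auto
qed

lemma mat_delete_row_sum:
  fixes B :: "'a::comm_ring_1 mat"
  assumes B: "B \<in> carrier_mat (Suc m) (Suc m)" and "u 0 = 0" and i: "i < m"
  shows "(\<Sum>j<Suc m. B $$ (Suc i, j) * u j) = (\<Sum>j<m. mat_delete B 0 0 $$ (i, j) * u (Suc j))"
proof -
  have "mat_delete B 0 0 $$ (i, j) = B $$ (Suc i, Suc j)" if "j < m" for j
    using that i B by (simp add: mat_delete_def)
  then show ?thesis unfolding sum.lessThan_Suc_shift using \<open>u 0 = 0\<close> by simp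
qed

lemma minor_eigenvalue_iff:
  fixes B :: "'a::comm_ring_1 mat"
  assumes B: "B \<in> carrier_mat n n"
  shows "eigenvalue (mat_delete B 0 0) a \<longleftrightarrow>
    (\<exists>u. u 0 = 0 \<and> (\<exists>i<n. u i \<noteq> 0) \<and> (\<forall>i. 0 < i \<longrightarrow> i < n \<longrightarrow> (\<Sum>j<n. B $$ (i,j) * u j) = a * u i))"
proof (cases n)
  case 0
  then have "mat_delete B 0 0 \<in> carrier_mat 0 0" using mat_delete_carrier[OF B] by simp
  with 0 show ?thesis using eigenvalue_iff_eigenvector_fun by blast
next
  case (Suc m)
  have minor: "mat_delete B 0 0 \<in> carrier_mat m m" using mat_delete_carrier[OF B] Suc by simp
  have shift: "(\<Sum>j<n. B $$ (Suc i, j) * u j) = (\<Sum>j<m. mat_delete B 0 0 $$ (i, j) * u (Suc j))"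
    if "u 0 = 0" "i < m" for u i
    using mat_delete_row_sum[where u = u, OF B[unfolded Suc] that] by (simp only: Suc)
  show ?thesis
  proof
    assume "eigenvalue (mat_delete B 0 0) a"
    then obtain w where w: "\<forall>i<m. (\<Sum>j<m. mat_delete B 0 0 $$ (i,j) * w j) = a * w i" "\<exists>i<m. w i \<noteq> 0"
      unfolding eigenvalue_iff_eigenvector_fun[OF minor] by blast
    define u where "u j = (if j = 0 then 0 else w (j - 1))" for j
    have u0: "u 0 = 0" and u_Suc: "\<And>j. u (Suc j) = w j" by (simp_all add: u_def)
    have "(\<Sum>j<n. B $$ (i,j) * u j) = a * u i" if i: "0 < i" "i < n" for i
    proof -
      obtain k where k: "i = Suc k" "k < m" using i Suc by (cases i) auto
      then show ?thesis using shift[of u k, OF u0 k(2)] w(1) u_Suc by simp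
    qed
    moreover have "\<exists>i<n. u i \<noteq> 0" using w(2) Suc u_Suc by auto
    ultimately show "\<exists>u. u 0 = 0 \<and> (\<exists>i<n. u i \<noteq> 0) \<and>
        (\<forall>i. 0 < i \<longrightarrow> i < n \<longrightarrow> (\<Sum>j<n. B $$ (i,j) * u j) = a * u i)"
      using u0 by blast
  next
    assume "\<exists>u. u 0 = 0 \<and> (\<exists>i<n. u i \<noteq> 0) \<and>
        (\<forall>i. 0 < i \<longrightarrow> i < n \<longrightarrow> (\<Sum>j<n. B $$ (i,j) * u j) = a * u i)"
    then obtain u where u: "u 0 = 0" "\<exists>i<n. u i \<noteq> 0"
      "\<And>i. 0 < i \<Longrightarrow> i < n \<Longrightarrow> (\<Sum>j<n. B $$ (i,j) * u j) = a * u i" by blast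
    have "(\<Sum>j<m. mat_delete B 0 0 $$ (i,j) * u (Suc j)) = a * u (Suc i)" if "i < m" for i
    proof -
      have "Suc i < n" using that Suc by simp
      then show ?thesis using shift[of u i, OF u(1) that] u(3)[of "Suc i"] by simp
    qed
    moreover have "\<exists>i<m. u (Suc i) \<noteq> 0"
    proof -
      obtain i where "i < n" "u i \<noteq> 0" using u(2) by blast
      with u(1) Suc show ?thesis by (cases i) auto
    qed
    ultimately show "eigenvalue (mat_delete B 0 0) a"
      unfolding eigenvalue_iff_eigenvector_fun[OF minor] by (intro exI[of _ "\<lambda>i. u (Suc i)"]) simp
  qed
qed

lemma finite_eigenvalues:
  fixes B :: "'a::field mat"
  assumes B: "B \<in> carrier_mat n n"
  shows "finite {a. eigenvalue B a}"
proof -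
  have "char_poly B \<noteq> 0" using degree_monic_char_poly[OF B] by auto
  then show ?thesis using poly_roots_finite eigenvalue_root_char_poly[OF B] by simp
qed

lemma simple_spectrum_eigenvectors:
  fixes B :: "'a::field mat"
  assumes B: "B \<in> carrier_mat n n" and card: "card {a. eigenvalue B a} = n"
  obtains lam V where "inj_on lam {..<n}" "\<And>l. l < n \<Longrightarrow> eigenvalue B (lam l)"
    "\<And>l i. l < n \<Longrightarrow> i < n \<Longrightarrow> (\<Sum>j<n. B $$ (i,j) * V l j) = lam l * V l i"
    "\<And>l. l < n \<Longrightarrow> \<exists>i<n. V l i \<noteq> 0"
proof -
  obtain lam where lam: "bij_betw lam {..<n} {a. eigenvalue B a}"
    using ex_bij_betw_nat_finite[OF finite_eigenvalues[OF B]] card by (auto simp: lessThan_atLeast0)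
  have inj: "inj_on lam {..<n}" and ev: "\<And>l. l < n \<Longrightarrow> eigenvalue B (lam l)"
    using lam by (auto simp: bij_betw_def)
  have "\<forall>l. \<exists>v. l < n \<longrightarrow> (\<forall>i<n. (\<Sum>j<n. B $$ (i,j) * v j) = lam l * v i) \<and> (\<exists>i<n. v i \<noteq> 0)"
    using ev eigenvalue_iff_eigenvector_fun[OF B] by blast
  then obtain V where "\<And>l i. l < n \<Longrightarrow> i < n \<Longrightarrow> (\<Sum>j<n. B $$ (i,j) * V l j) = lam l * V l i"
    and "\<And>l. l < n \<Longrightarrow> \<exists>i<n. V l i \<noteq> 0"
    by (subst (asm) choice_iff) blast
  with inj ev show thesis by (rule that)
qed

section \<open>Eigenvectors of symmetric matrices\<close>

lemma symmetric_eigenvectors_orthogonal: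
  fixes B :: "nat \<Rightarrow> nat \<Rightarrow> 'a::idom"
  assumes sym: "\<And>i j. i < n \<Longrightarrow> j < n \<Longrightarrow> B i j = B j i"
    and v: "\<And>i. i < n \<Longrightarrow> (\<Sum>j<n. B i j * v j) = a * v i"
    and w: "\<And>i. i < n \<Longrightarrow> (\<Sum>j<n. B i j * w j) = b * w i"
    and "a \<noteq> b"
  shows "(\<Sum>i<n. v i * w i) = 0"
proof -
  have "a * (\<Sum>i<n. v i * w i) = (\<Sum>i<n. (\<Sum>j<n. B i j * v j) * w i)"
    using v by (simp add: sum_distrib_left mult.assoc)
  also have "\<dots> = (\<Sum>i<n. \<Sum>j<n. B i j * v j * w i)"
    by (simp add: sum_distrib_right)
  also have "\<dots> = (\<Sum>j<n. \<Sum>i<n. v j * (B j i * w i))"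
    using sym by (subst sum.swap) (auto intro!: sum.cong simp: mult_ac)
  also have "\<dots> = b * (\<Sum>i<n. v i * w i)"
    using w by (simp add: sum_distrib_left[symmetric] mult_ac)
  finally have "(a - b) * (\<Sum>i<n. v i * w i) = 0" by (simp add: algebra_simps)
  with \<open>a \<noteq> b\<close> show ?thesis by simp
qed

lemma distinct_eigenvectors_independent:
  fixes B V :: "nat \<Rightarrow> nat \<Rightarrow> 'a::idom"
  assumes eig: "\<And>l i. l < n \<Longrightarrow> i < n \<Longrightarrow> (\<Sum>j<n. B i j * V l j) = lam l * V l i"
    and nonzero: "\<And>l. l < n \<Longrightarrow> \<exists>i<n. V l i \<noteq> 0"
    and inj: "inj_on lam {..<n}"
    and "S \<subseteq> {..<n}" and "\<And>i. i < n \<Longrightarrow> (\<Sum>l\<in>S. c l * V l i) = 0"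
  shows "\<forall>l\<in>S. c l = 0"
proof -
  have "finite S" using \<open>S \<subseteq> {..<n}\<close> finite_subset by blast
  then show ?thesis using assms(4,5)
  proof (induction S arbitrary: c rule: finite_induct)
    case empty
    then show ?case by simp
  next
    case (insert a S)
    have a: "a < n" and S: "S \<subseteq> {..<n}" using insert.prems(1) by auto
    have "(\<Sum>l\<in>S. (c l * (lam l - lam a)) * V l i) = 0" if i: "i < n" for i
    proof -
      have "(\<Sum>l\<in>insert a S. c l * lam l * V l i) = (\<Sum>l\<in>insert a S. c l * (\<Sum>j<n. B i j * V l j))"
        using eig i insert.prems(1) by (intro sum.cong) auto
      also have "\<dots> = (\<Sum>j<n. B i j * (\<Sum>l\<in>insert a S. c l * V l j))"
        unfolding sum_distrib_left by (subst sum.swap) (simp add: mult_ac)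
      also have "\<dots> = 0" using insert.prems(2) by simp
      finally have "(\<Sum>l\<in>insert a S. c l * lam l * V l i) = 0" .
      moreover have "(\<Sum>l\<in>insert a S. (c l * (lam l - lam a)) * V l i)
          = (\<Sum>l\<in>insert a S. c l * lam l * V l i) - lam a * (\<Sum>l\<in>insert a S. c l * V l i)"
        by (simp add: sum_distrib_left sum_subtractf algebra_simps)
      ultimately have "(\<Sum>l\<in>insert a S. (c l * (lam l - lam a)) * V l i) = 0"
        using insert.prems(2)[OF i] by simp
      then show ?thesis using insert.hyps by simp
    qed
    then have "\<forall>l\<in>S. c l * (lam l - lam a) = 0"
      using insert.IH[OF S, of "\<lambda>l. c l * (lam l - lam a)"] by simp
    moreover have "lam l \<noteq> lam a" if "l \<in> S" for l
      using inj_onD[OF inj, of l a] that a S insert.hyps(2) by auto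
    ultimately have cS: "\<forall>l\<in>S. c l = 0" by simp
    then have "c a * V a i = 0" if "i < n" for i
      using insert.prems(2)[OF that] insert.hyps by simp
    then have "c a = 0" using nonzero[OF a] by auto
    with cS show ?case by simp
  qed
qed

lemma injective_matrix_transpose_injective:
  fixes W :: "nat \<Rightarrow> nat \<Rightarrow> 'a::idom"
  assumes inj: "\<And>c. (\<And>i. i < n \<Longrightarrow> (\<Sum>j<n. W i j * c j) = 0) \<Longrightarrow> \<forall>j<n. c j = 0"
    and x: "\<And>i. i < n \<Longrightarrow> (\<Sum>j<n. W j i * x j) = 0"
  shows "\<forall>j<n. x j = 0"
proof -
  define A where "A = mat n n (\<lambda>(i,j). W i j)"
  have A: "A \<in> carrier_mat n n" by (simp add: A_def)
  have "det A \<noteq> 0"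
  proof
    assume "det A = 0"
    then obtain v where v: "v \<in> carrier_vec n" "v \<noteq> 0\<^sub>v n" "A *\<^sub>v v = 0\<^sub>v n"
      using det_0_iff_vec_prod_zero[OF A] by auto
    have "(\<Sum>j<n. W i j * v $ j) = 0" if "i < n" for i
      using arg_cong[OF v(3), of "\<lambda>y. y $ i"] that v(1)
      by (simp add: A_def scalar_prod_def lessThan_atLeast0)
    then have "\<forall>j<n. v $ j = 0" by (rule inj)
    with v(1,2) show False by (auto simp: vec_eq_iff)
  qed
  then have "det (transpose_mat A) \<noteq> 0" using det_transpose[OF A] by simp
  moreover have "transpose_mat A *\<^sub>v vec n x = 0\<^sub>v n"
    using x by (intro eq_vecI) (auto simp: A_def scalar_prod_def lessThan_atLeast0)
  ultimately have "vec n x = 0\<^sub>v n"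
    using det_0_iff_vec_prod_zero[OF transpose_carrier_mat[THEN iffD2, OF A]]
    by (metis vec_carrier)
  then show ?thesis by (auto simp: vec_eq_iff)
qed

lemma symmetric_eigenvectors_nonisotropic:
  fixes B V :: "nat \<Rightarrow> nat \<Rightarrow> 'a::idom"
  assumes sym: "\<And>i j. i < n \<Longrightarrow> j < n \<Longrightarrow> B i j = B j i"
    and eig: "\<And>l i. l < n \<Longrightarrow> i < n \<Longrightarrow> (\<Sum>j<n. B i j * V l j) = lam l * V l i"
    and nonzero: "\<And>l. l < n \<Longrightarrow> \<exists>i<n. V l i \<noteq> 0"
    and inj: "inj_on lam {..<n}" and l: "l < n"
  shows "(\<Sum>i<n. V l i * V l i) \<noteq> 0"
proof
  assume isotropic: "(\<Sum>i<n. V l i * V l i) = 0"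
  have orth: "(\<Sum>j<n. V m j * V l j) = 0" if "m < n" for m
  proof (cases "m = l")
    case False
    then have "lam m \<noteq> lam l" using inj_onD[OF inj] that l by blast
    then show ?thesis
      using symmetric_eigenvectors_orthogonal[of n B "V m" "lam m" "V l" "lam l"] sym eig that l
      by simp
  qed (use isotropic in simp)
  have independent: "\<forall>l<n. c l = 0" if "\<And>i. i < n \<Longrightarrow> (\<Sum>l<n. V l i * c l) = 0" for c
    using distinct_eigenvectors_independent[OF eig nonzero inj, of "{..<n}" c] that
    by (simp add: mult.commute)
  have "\<forall>j<n. V l j = 0"
    using injective_matrix_transpose_injective[of n "\<lambda>i l. V l i" "V l"] independent orth by simp
  with nonzero[OF l] show False by blast
qed

section \<open>Complex orthogonal matrices\<close>

definition orthogonal_fun :: "nat \<Rightarrow> (nat \<Rightarrow> nat \<Rightarrow> 'a::comm_ring_1) \<Rightarrow> bool" where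
  "orthogonal_fun n P \<longleftrightarrow> (\<forall>i<n. \<forall>j<n. (\<Sum>k<n. P k i * P k j) = (if i = j then 1 else 0))"

lemma orthogonal_fun_transpose:
  fixes P :: "nat \<Rightarrow> nat \<Rightarrow> 'a::field"
  assumes "orthogonal_fun n P"
  shows "orthogonal_fun n (\<lambda>i j. P j i)"
proof -
  define A where "A = mat n n (\<lambda>(k,i). P k i)"
  have A: "A \<in> carrier_mat n n" and AT: "transpose_mat A \<in> carrier_mat n n" by (simp_all add: A_def)
  have "transpose_mat A * A = 1\<^sub>m n"
  proof (rule eq_matI)
    fix i j assume "i < dim_row (1\<^sub>m n)" "j < dim_col (1\<^sub>m n)"
    then have "i < n" "j < n" by simp_all
    then have "(transpose_mat A * A) $$ (i,j) = (\<Sum>k<n. P k i * P k j)"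
      by (simp add: A_def scalar_prod_def lessThan_atLeast0)
    then show "(transpose_mat A * A) $$ (i,j) = 1\<^sub>m n $$ (i,j)"
      using assms \<open>i < n\<close> \<open>j < n\<close> by (simp add: orthogonal_fun_def)
  qed (simp_all add: A_def)
  then have AAT: "A * transpose_mat A = 1\<^sub>m n" by (rule mat_mult_left_right_inverse[OF AT A])
  show ?thesis
    unfolding orthogonal_fun_def
  proof (intro allI impI)
    fix i j assume "i < n" "j < n"
    then have "(A * transpose_mat A) $$ (i,j) = (\<Sum>k<n. P i k * P j k)"
      by (simp add: A_def scalar_prod_def lessThan_atLeast0)
    then show "(\<Sum>k<n. P i k * P j k) = (if i = j then 1 else 0)"
      using AAT \<open>i < n\<close> \<open>j < n\<close> by simp
  qed
qed

lemma orthogonal_fun_normalize: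
  fixes V :: "nat \<Rightarrow> nat \<Rightarrow> complex"
  assumes orth: "\<And>l m. l < n \<Longrightarrow> m < n \<Longrightarrow> l \<noteq> m \<Longrightarrow> (\<Sum>i<n. V l i * V m i) = 0"
    and nonisotropic: "\<And>l. l < n \<Longrightarrow> (\<Sum>i<n. V l i * V l i) \<noteq> 0"
  shows "orthogonal_fun n (\<lambda>l i. V l i / csqrt (\<Sum>k<n. V l k * V l k))"
proof -
  define s where "s l = csqrt (\<Sum>k<n. V l k * V l k)" for l
  have s2: "s l * s l = (\<Sum>k<n. V l k * V l k)" for l
    unfolding s_def by (metis power2_csqrt power2_eq_square)
  have "orthogonal_fun n (\<lambda>i l. V l i / s l)"
    unfolding orthogonal_fun_def
  proof (intro allI impI)
    fix l m assume lm: "l < n" "m < n"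
    have "(\<Sum>k<n. V l k / s l * (V m k / s m)) = (\<Sum>k<n. V l k * V m k) / (s l * s m)"
      by (simp add: sum_divide_distrib)
    then show "(\<Sum>k<n. V l k / s l * (V m k / s m)) = (if l = m then 1 else 0)"
      using orth[OF lm] nonisotropic[OF lm(1)] s2[of l] by auto
  qed
  from orthogonal_fun_transpose[OF this] show ?thesis by (simp add: s_def)
qed

lemma orthogonal_fun_expansion:
  fixes P :: "nat \<Rightarrow> nat \<Rightarrow> 'a::comm_ring_1"
  assumes P: "orthogonal_fun n P" and i: "i < n"
  shows "u i = (\<Sum>m<n. P m i * (\<Sum>j<n. P m j * u j))"
proof -
  have "(\<Sum>m<n. P m i * (\<Sum>j<n. P m j * u j)) = (\<Sum>j<n. (\<Sum>m<n. P m i * P m j) * u j)"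
    unfolding sum_distrib_left sum_distrib_right by (subst sum.swap) (simp add: mult_ac)
  also have "\<dots> = (\<Sum>j<n. if i = j then u j else 0)"
    using P i by (intro sum.cong) (auto simp: orthogonal_fun_def)
  also have "\<dots> = u i" using i by simp
  finally show ?thesis by simp
qed

lemma orthogonal_fun_coordinates_zero:
  fixes P :: "nat \<Rightarrow> nat \<Rightarrow> 'a::comm_ring_1"
  assumes P: "orthogonal_fun n P" and zero: "\<And>m. m < n \<Longrightarrow> (\<Sum>j<n. P m j * u j) = 0"
    and i: "i < n"
  shows "u i = 0"
proof -
  have "u i = (\<Sum>m<n. P m i * (\<Sum>j<n. P m j * u j))" by (rule orthogonal_fun_expansion[OF P i])
  also have "\<dots> = 0" using zero by simp
  finally show ?thesis .
qed

definition householder :: "nat \<Rightarrow> (nat \<Rightarrow> 'a::field) \<Rightarrow> nat \<Rightarrow> nat \<Rightarrow> 'a" where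
  "householder n w i j = (if i = j then 1 else 0) - 2 / (\<Sum>k<n. w k * w k) * w i * w j"

lemma householder_orthogonal:
  assumes S: "(\<Sum>k<n. w k * w k) \<noteq> 0"
  shows "orthogonal_fun n (householder n w)"
  unfolding orthogonal_fun_def
proof (intro allI impI)
  fix i j assume i: "i < n" and j: "j < n"
  define c where "c = 2 / (\<Sum>k<n. w k * w k)"
  have c: "c * (\<Sum>k<n. w k * w k) = 2" using S by (simp add: c_def)
  have "householder n w k i * householder n w k j
      = (if k = i \<and> k = j then 1 else 0) - (if k = i then c * w i * w j else 0)
        - (if k = j then c * w i * w j else 0) + c * c * w i * w j * (w k * w k)" for k
    by (auto simp: householder_def c_def algebra_simps)
  moreover have "(\<Sum>k<n. if k = i \<and> k = j then 1 else 0) = (if i = j then 1 else (0::'a))"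
    using i by (cases "i = j") (auto intro: sum.neutral)
  moreover have "(\<Sum>k<n. c * c * w i * w j * (w k * w k)) = c * w i * w j * (c * (\<Sum>k<n. w k * w k))"
    by (simp add: sum_distrib_left mult_ac)
  ultimately have "(\<Sum>k<n. householder n w k i * householder n w k j)
      = (if i = j then 1 else 0) - c * w i * w j - c * w i * w j + c * w i * w j * (c * (\<Sum>k<n. w k * w k))"
    using i j by (simp add: sum.distrib sum_subtractf)
  then show "(\<Sum>k<n. householder n w k i * householder n w k j) = (if i = j then 1 else 0)"
    unfolding c by (simp add: algebra_simps)
qed

text \<open>The reflection in \<open>w = (1, 2, \<dots>, 2)\<close> has first column \<open>(1 - 2/S, -4/S, \<dots>, -4/S)\<close>
  with \<open>S = 4n - 3\<close>, which is neither \<open>0\<close> nor \<open>2\<close>.\<close>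

lemma exists_orthogonal_first_column_nonzero:
  obtains P :: "nat \<Rightarrow> nat \<Rightarrow> complex" where "orthogonal_fun n P" "\<And>l. l < n \<Longrightarrow> P l 0 \<noteq> 0"
proof (cases n)
  case 0
  then show ?thesis using that by (simp add: orthogonal_fun_def)
next
  case (Suc m)
  define w :: "nat \<Rightarrow> complex" where "w i = (if i = 0 then 1 else 2)" for i
  define S :: complex where "S = of_nat (Suc (4 * m))"
  have sum_w: "(\<Sum>k<n. w k * w k) = S"
    unfolding Suc sum.lessThan_Suc_shift by (simp add: w_def S_def)
  have "Suc (4 * m) \<noteq> 0" "Suc (4 * m) \<noteq> 2" by presburger+
  then have "S \<noteq> of_nat 0" "S \<noteq> of_nat 2" unfolding S_def by (simp_all only: of_nat_eq_iff not_False_eq_True)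
  then have "S \<noteq> 0" "S \<noteq> 2" by simp_all
  have "orthogonal_fun n (householder n w)"
    by (rule householder_orthogonal) (simp add: sum_w \<open>S \<noteq> 0\<close>)
  moreover have "householder n w l 0 \<noteq> 0" if "l < n" for l
    unfolding householder_def sum_w using \<open>S \<noteq> 0\<close> \<open>S \<noteq> 2\<close>
    by (cases "l = 0") (simp_all add: w_def field_simps)
  ultimately show ?thesis by (rule that)
qed

definition spectral_sum :: "nat \<Rightarrow> (nat \<Rightarrow> 'a::comm_semiring_1) \<Rightarrow> (nat \<Rightarrow> nat \<Rightarrow> 'a) \<Rightarrow> nat \<Rightarrow> nat \<Rightarrow> 'a"
  where "spectral_sum n d P i j = (\<Sum>l<n. d l * P l i * P l j)"

lemma spectral_sum_sym: "spectral_sum n d P i j = spectral_sum n d P j i"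
  by (simp add: spectral_sum_def mult_ac)

lemma eigenbasis_spectral_sum:
  fixes B P :: "nat \<Rightarrow> nat \<Rightarrow> 'a::comm_ring_1"
  assumes P: "orthogonal_fun n P"
    and eig: "\<And>l i. l < n \<Longrightarrow> i < n \<Longrightarrow> (\<Sum>k<n. B i k * P l k) = d l * P l i"
    and i: "i < n" and j: "j < n"
  shows "B i j = spectral_sum n d P i j"
proof -
  have "spectral_sum n d P i j = (\<Sum>l<n. (\<Sum>k<n. B i k * P l k) * P l j)"
    using eig i by (simp add: spectral_sum_def)
  also have "\<dots> = (\<Sum>k<n. B i k * (\<Sum>l<n. P l k * P l j))"
    unfolding sum_distrib_left sum_distrib_right by (subst sum.swap) (simp add: mult_ac)
  also have "\<dots> = (\<Sum>k<n. if k = j then B i k else 0)"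
    using P j by (intro sum.cong) (auto simp: orthogonal_fun_def)
  also have "\<dots> = B i j" using j by simp
  finally show ?thesis by simp
qed

lemma spectral_sum_eigenvector:
  fixes P :: "nat \<Rightarrow> nat \<Rightarrow> 'a::comm_ring_1"
  assumes P: "orthogonal_fun n (\<lambda>i j. P j i)" and m: "m < n"
  shows "(\<Sum>j<n. spectral_sum n d P i j * P m j) = d m * P m i"
proof -
  have "(\<Sum>j<n. spectral_sum n d P i j * P m j) = (\<Sum>l<n. d l * P l i * (\<Sum>j<n. P l j * P m j))"
    unfolding spectral_sum_def sum_distrib_left sum_distrib_right
    by (subst sum.swap) (simp add: mult_ac)
  also have "\<dots> = (\<Sum>l<n. if l = m then d m * P m i else 0)"
    using P m by (intro sum.cong) (auto simp: orthogonal_fun_def)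
  also have "\<dots> = d m * P m i" using m by simp
  finally show ?thesis .
qed

lemma spectral_sum_coordinate:
  fixes P :: "nat \<Rightarrow> nat \<Rightarrow> 'a::comm_ring_1"
  assumes P: "orthogonal_fun n (\<lambda>i j. P j i)" and m: "m < n"
  shows "(\<Sum>i<n. P m i * (\<Sum>j<n. spectral_sum n d P i j * u j)) = d m * (\<Sum>j<n. P m j * u j)"
proof -
  have "(\<Sum>i<n. P m i * (\<Sum>j<n. spectral_sum n d P i j * u j))
      = (\<Sum>j<n. u j * (\<Sum>i<n. spectral_sum n d P j i * P m i))"
    unfolding sum_distrib_left by (subst sum.swap) (simp add: spectral_sum_sym mult_ac)
  also have "\<dots> = d m * (\<Sum>j<n. P m j * u j)"
    using spectral_sum_eigenvector[OF P m] by (simp add: sum_distrib_left mult_ac)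
  finally show ?thesis .
qed

lemma spectral_sum_eigenvector_coordinates:
  fixes P :: "nat \<Rightarrow> nat \<Rightarrow> 'a::comm_ring_1"
  assumes rows: "orthogonal_fun n (\<lambda>i j. P j i)" and m: "m < n"
    and u: "\<And>i. i < n \<Longrightarrow> (\<Sum>j<n. spectral_sum n d P i j * u j) = a * u i"
  shows "(d m - a) * (\<Sum>j<n. P m j * u j) = 0"
proof -
  have "d m * (\<Sum>j<n. P m j * u j) = (\<Sum>i<n. P m i * (\<Sum>j<n. spectral_sum n d P i j * u j))"
    by (rule spectral_sum_coordinate[OF rows m, symmetric])
  also have "\<dots> = (\<Sum>i<n. P m i * (a * u i))"
    using u by (intro sum.cong) auto
  also have "\<dots> = a * (\<Sum>j<n. P m j * u j)"
    by (simp add: sum_distrib_left mult_ac)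
  finally show ?thesis by (simp add: algebra_simps)
qed

section \<open>Spectrally generic matrices\<close>

lemma resultant_eq_0_iff_common_root:
  fixes p q :: "complex poly"
  assumes "p \<noteq> 0"
  shows "resultant p q = 0 \<longleftrightarrow> (\<exists>a. poly p a = 0 \<and> poly q a = 0)"
proof
  assume "resultant p q = 0"
  then have "\<not> constant (poly (gcd p q))"
    using constant_degree[of "gcd p q"] by (simp add: resultant_0_gcd)
  then obtain z where "poly (gcd p q) z = 0"
    using fundamental_theorem_of_algebra by blast
  then show "\<exists>a. poly p a = 0 \<and> poly q a = 0"
    by (metis dvd_def gcd_dvd1 gcd_dvd2 mult_eq_0_iff poly_mult)
next
  assume "\<exists>a. poly p a = 0 \<and> poly q a = 0"
  then obtain a where "[:-a,1:] dvd p" "[:-a,1:] dvd q" by (auto simp: poly_eq_0_iff_dvd)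
  then have "[:-a,1:] dvd gcd p q" by simp
  moreover have "gcd p q \<noteq> 0" using assms by simp
  ultimately have "degree [:-a,1:] \<le> degree (gcd p q)" by (rule dvd_imp_degree_le)
  then show "resultant p q = 0" by (simp add: resultant_0_gcd)
qed

text \<open>Stated through resultants so that along a polynomial family of matrices it fails only at the
  roots of a single polynomial (\<open>poly_generic_resultant\<close>).\<close>

definition generic_resultant :: "'a::idom mat \<Rightarrow> 'a" where
  "generic_resultant B =
     resultant (char_poly B) (pderiv (char_poly B)) * resultant (char_poly B) (char_poly (mat_delete B 0 0))"

definition spectrally_generic :: "complex mat \<Rightarrow> bool" where
  "spectrally_generic B \<longleftrightarrow> generic_resultant B \<noteq> 0"

lemma spectrally_generic_iff:
  assumes B: "B \<in> carrier_mat n n"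
  shows "spectrally_generic B \<longleftrightarrow>
    card {a. eigenvalue B a} = n \<and> (\<forall>a. eigenvalue B a \<longrightarrow> \<not> eigenvalue (mat_delete B 0 0) a)"
proof -
  let ?p = "char_poly B"
  have deg: "degree ?p = n" and p0: "?p \<noteq> 0" using degree_monic_char_poly[OF B] by auto
  have roots: "{a. eigenvalue B a} = {a. poly ?p a = 0}" using eigenvalue_root_char_poly[OF B] by simp
  have "resultant ?p (pderiv ?p) \<noteq> 0 \<longleftrightarrow> card {a. eigenvalue B a} = n"
    unfolding roots rsquarefree_card_degree[OF p0, symmetric] deg[symmetric] rsquarefree_roots
    using resultant_eq_0_iff_common_root[OF p0] by blast
  moreover have "resultant ?p (char_poly (mat_delete B 0 0)) \<noteq> 0 \<longleftrightarrow>
      (\<forall>a. eigenvalue B a \<longrightarrow> \<not> eigenvalue (mat_delete B 0 0) a)"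
    using resultant_eq_0_iff_common_root[OF p0] eigenvalue_root_char_poly[OF B]
      eigenvalue_root_char_poly[OF mat_delete_carrier[OF B]] by auto
  ultimately show ?thesis unfolding spectrally_generic_def generic_resultant_def by simp
qed

lemma spectrally_generic_orthogonal_diagonalization:
  fixes B :: "complex mat"
  assumes B: "B \<in> carrier_mat n n" and sym: "\<And>i j. i < n \<Longrightarrow> j < n \<Longrightarrow> B $$ (i,j) = B $$ (j,i)"
    and gen: "spectrally_generic B"
  obtains P lam where "orthogonal_fun n P" "\<And>l. l < n \<Longrightarrow> P l 0 \<noteq> 0"
    "\<And>i j. i < n \<Longrightarrow> j < n \<Longrightarrow> B $$ (i,j) = spectral_sum n lam P i j"
proof -
  have card: "card {a. eigenvalue B a} = n"
    and minor: "\<And>a. eigenvalue B a \<Longrightarrow> \<not> eigenvalue (mat_delete B 0 0) a"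
    using gen spectrally_generic_iff[OF B] by auto
  obtain lam V where inj: "inj_on lam {..<n}" and ev: "\<And>l. l < n \<Longrightarrow> eigenvalue B (lam l)"
    and V: "\<And>l i. l < n \<Longrightarrow> i < n \<Longrightarrow> (\<Sum>j<n. B $$ (i,j) * V l j) = lam l * V l i"
    and nonzero: "\<And>l. l < n \<Longrightarrow> \<exists>i<n. V l i \<noteq> 0"
    using simple_spectrum_eigenvectors[OF B card] by blast
  have nonisotropic: "(\<Sum>i<n. V l i * V l i) \<noteq> 0" if "l < n" for l
    by (rule symmetric_eigenvectors_nonisotropic[of n "\<lambda>i j. B $$ (i,j)" V lam])
      (use sym V nonzero inj that in auto)
  have "orthogonal_fun n (\<lambda>l i. V l i / csqrt (\<Sum>k<n. V l k * V l k))" (is "orthogonal_fun n ?P")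
  proof (rule orthogonal_fun_normalize[OF _ nonisotropic])
    fix l m assume "l < n" "m < n" "l \<noteq> m"
    moreover from this have "lam l \<noteq> lam m" using inj_onD[OF inj] by blast
    ultimately show "(\<Sum>i<n. V l i * V m i) = 0"
      using symmetric_eigenvectors_orthogonal[of n "\<lambda>i j. B $$ (i,j)" "V l" "lam l" "V m" "lam m"]
        sym V by simp
  qed
  moreover have eigP: "(\<Sum>k<n. B $$ (i,k) * ?P l k) = lam l * ?P l i" if "l < n" "i < n" for l i
    using V[OF that] by (simp add: sum_divide_distrib[symmetric] mult.assoc)
  moreover have "?P l 0 \<noteq> 0" if l: "l < n" for l
  proof
    assume "?P l 0 = 0"
    then have "V l 0 = 0" using nonisotropic[OF l] by simp
    then have "eigenvalue (mat_delete B 0 0) (lam l)"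
      unfolding minor_eigenvalue_iff[OF B] using V[OF l] nonzero[OF l] by (intro exI[of _ "V l"]) simp
    with minor ev l show False by blast
  qed
  ultimately show thesis
    using eigenbasis_spectral_sum[of n ?P "\<lambda>i j. B $$ (i,j)" lam] by (intro that) auto
qed

lemma spectral_sum_eigenvalue_iff:
  fixes P :: "nat \<Rightarrow> nat \<Rightarrow> 'a::field"
  assumes P: "orthogonal_fun n P"
  shows "eigenvalue (mat n n (\<lambda>(i,j). spectral_sum n d P i j)) a \<longleftrightarrow> a \<in> d ` {..<n}"
proof -
  let ?C = "mat n n (\<lambda>(i,j). spectral_sum n d P i j)"
  have C: "?C \<in> carrier_mat n n" by simp
  have rows: "orthogonal_fun n (\<lambda>i j. P j i)" by (rule orthogonal_fun_transpose[OF P])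
  have sum_C: "(\<Sum>j<n. ?C $$ (i,j) * u j) = (\<Sum>j<n. spectral_sum n d P i j * u j)" if "i < n" for i u
    using that by (intro sum.cong) auto
  show ?thesis
  proof
    assume "eigenvalue ?C a"
    then obtain u where u: "\<And>i. i < n \<Longrightarrow> (\<Sum>j<n. spectral_sum n d P i j * u j) = a * u i"
      and nonzero: "\<exists>i<n. u i \<noteq> 0"
      unfolding eigenvalue_iff_eigenvector_fun[OF C] using sum_C by auto
    show "a \<in> d ` {..<n}"
    proof (rule ccontr)
      assume a: "a \<notin> d ` {..<n}"
      have "(\<Sum>j<n. P m j * u j) = 0" if "m < n" for m
        using spectral_sum_eigenvector_coordinates[OF rows that u] a that by auto
      then have "u i = 0" if "i < n" for i
        using orthogonal_fun_coordinates_zero[OF P _ that] by blast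
      with nonzero show False by blast
    qed
  next
    assume "a \<in> d ` {..<n}"
    then obtain m where m: "m < n" "a = d m" by auto
    have unit: "(\<Sum>k<n. P m k * P m k) = 1" using rows m by (simp add: orthogonal_fun_def)
    have "\<exists>i<n. P m i \<noteq> 0"
    proof (rule ccontr)
      assume "\<not> (\<exists>i<n. P m i \<noteq> 0)"
      then have "(\<Sum>k<n. P m k * P m k) = 0" by (intro sum.neutral) simp
      with unit show False by simp
    qed
    then show "eigenvalue ?C a"
      unfolding eigenvalue_iff_eigenvector_fun[OF C] using spectral_sum_eigenvector[OF rows m(1)] sum_C m
      by (intro exI[of _ "P m"]) simp
  qed
qed

text \<open>With \<open>C\<close> the spectral sum, \<open>y = (C - d\<^sub>l) u\<close> vanishes off the first coordinate. In the eigenbasis,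
  \<open>(d\<^sub>m - d\<^sub>l) (P u)\<^sub>m = P\<^sub>m\<^sub>0 y\<^sub>0\<close>; taking \<open>m = l\<close> gives \<open>y\<^sub>0 = 0\<close>, so \<open>P u\<close> is supported
  at \<open>l\<close>, and then \<open>u\<^sub>0 = P\<^sub>l\<^sub>0 (P u)\<^sub>l = 0\<close> kills it.\<close>

lemma spectral_sum_eigenvector_vanishing_first:
  fixes P :: "nat \<Rightarrow> nat \<Rightarrow> 'a::field"
  assumes P: "orthogonal_fun n P" and first: "\<And>l. l < n \<Longrightarrow> P l 0 \<noteq> 0"
    and inj: "inj_on d {..<n}" and l: "l < n"
    and u: "\<And>i. 0 < i \<Longrightarrow> i < n \<Longrightarrow> (\<Sum>j<n. spectral_sum n d P i j * u j) = d l * u i"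
    and u0: "u 0 = 0"
  shows "\<forall>i<n. u i = 0"
proof -
  have rows: "orthogonal_fun n (\<lambda>i j. P j i)" by (rule orthogonal_fun_transpose[OF P])
  define y where "y i = (\<Sum>j<n. spectral_sum n d P i j * u j) - d l * u i" for i
  define v where "v m = (\<Sum>j<n. P m j * u j)" for m
  have "(\<Sum>i<n. P m i * y i) = (d m - d l) * v m" if "m < n" for m
  proof -
    have "(\<Sum>i<n. P m i * y i) = (\<Sum>i<n. P m i * (\<Sum>j<n. spectral_sum n d P i j * u j)) - d l * v m"
      by (simp add: y_def v_def right_diff_distrib sum_subtractf sum_distrib_left mult_ac)
    also have "\<dots> = (d m - d l) * v m"
      unfolding spectral_sum_coordinate[OF rows that] v_def by (simp add: algebra_simps)
    finally show ?thesis .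
  qed
  moreover have "(\<Sum>i<n. P m i * y i) = P m 0 * y 0" for m
  proof -
    obtain k where k: "n = Suc k" using l by (cases n) auto
    have "y (Suc i) = 0" if "i < k" for i using u[of "Suc i"] that k by (simp add: y_def)
    then show ?thesis unfolding k sum.lessThan_Suc_shift by simp
  qed
  ultimately have Pv: "(d m - d l) * v m = P m 0 * y 0" if "m < n" for m
    using that by simp
  have "y 0 = 0" using Pv[OF l] first[OF l] by simp
  then have "v m = 0" if "m < n" "m \<noteq> l" for m
    using Pv[OF that(1)] inj_onD[OF inj, of m l] that l by auto
  then have "(\<Sum>m<n. P m 0 * v m) = P l 0 * v l"
    using l by (subst sum.remove[of _ l]) (auto intro!: sum.neutral)
  moreover have "u 0 = (\<Sum>m<n. P m 0 * v m)"
    unfolding v_def using l by (intro orthogonal_fun_expansion[OF P]) simp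
  ultimately have "P l 0 * v l = 0" using u0 by simp
  then have "v l = 0" using first[OF l] by simp
  then have "v m = 0" if "m < n" for m
    using \<open>\<And>m. m < n \<Longrightarrow> m \<noteq> l \<Longrightarrow> v m = 0\<close> that by blast
  then show ?thesis unfolding v_def using orthogonal_fun_coordinates_zero[OF P] by blast
qed

lemma orthogonal_diagonalization_spectrally_generic:
  fixes P :: "nat \<Rightarrow> nat \<Rightarrow> complex"
  assumes P: "orthogonal_fun n P" and first: "\<And>l. l < n \<Longrightarrow> P l 0 \<noteq> 0"
    and inj: "inj_on d {..<n}"
  shows "spectrally_generic (mat n n (\<lambda>(i,j). spectral_sum n d P i j))"
proof -
  let ?C = "mat n n (\<lambda>(i,j). spectral_sum n d P i j)"
  have C: "?C \<in> carrier_mat n n" by simp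
  have ev: "{a. eigenvalue ?C a} = d ` {..<n}" using spectral_sum_eigenvalue_iff[OF P] by auto
  have "\<not> eigenvalue (mat_delete ?C 0 0) (d l)" if l: "l < n" for l
  proof
    assume "eigenvalue (mat_delete ?C 0 0) (d l)"
    then obtain u where "u 0 = 0" "\<exists>i<n. u i \<noteq> 0"
      "\<And>i. 0 < i \<Longrightarrow> i < n \<Longrightarrow> (\<Sum>j<n. spectral_sum n d P i j * u j) = d l * u i"
      unfolding minor_eigenvalue_iff[OF C] by auto
    with spectral_sum_eigenvector_vanishing_first[OF P first inj l] show False by blast
  qed
  then show ?thesis
    unfolding spectrally_generic_iff[OF C] ev using card_image[OF inj] spectral_sum_eigenvalue_iff[OF P]
    by auto
qed

lemma exists_spectrally_generic_symmetric:
  obtains C :: "complex mat" where "C \<in> carrier_mat n n"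
    "\<And>i j. i < n \<Longrightarrow> j < n \<Longrightarrow> C $$ (i,j) = C $$ (j,i)" "spectrally_generic C"
proof -
  obtain P :: "nat \<Rightarrow> nat \<Rightarrow> complex" where P: "orthogonal_fun n P" "\<And>l. l < n \<Longrightarrow> P l 0 \<noteq> 0"
    using exists_orthogonal_first_column_nonzero by blast
  have "inj_on (of_nat :: nat \<Rightarrow> complex) {..<n}" by (simp add: inj_on_def)
  then have "spectrally_generic (mat n n (\<lambda>(i,j). spectral_sum n of_nat P i j))"
    using orthogonal_diagonalization_spectrally_generic[OF P(1) P(2)] by blast
  moreover have "mat n n (\<lambda>(i,j). spectral_sum n of_nat P i j) $$ (i,j)
      = mat n n (\<lambda>(i,j). spectral_sum n of_nat P i j) $$ (j,i)" if "i < n" "j < n" for i j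
    using that spectral_sum_sym by simp
  ultimately show thesis by (intro that) simp_all
qed

section \<open>Density\<close>

lemma poly_generic_resultant:
  fixes N :: "'a::field_char_0 poly mat"
  assumes N: "N \<in> carrier_mat n n"
  shows "poly (generic_resultant N) s = generic_resultant (map_mat (\<lambda>q. poly q s) N)"
proof -
  let ?h = "\<lambda>q. poly q s"
  let ?L = "map_mat ?h N"
  have hom: "comm_ring_hom ?h" by unfold_locales auto
  have L: "?L \<in> carrier_mat n n" using N by simp
  have minor_N: "mat_delete N 0 0 \<in> carrier_mat (n - 1) (n - 1)" by (rule mat_delete_carrier[OF N])
  have eval_minor: "map_mat ?h (mat_delete N 0 0) = mat_delete ?L 0 0"
    using N by (intro eq_matI) (auto simp: mat_delete_def)
  define p where "p = char_poly N"
  have p: "char_poly ?L = map_poly ?h p"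
    unfolding p_def by (rule poly_hom.char_poly_hom[OF N])
  have q: "char_poly (mat_delete ?L 0 0) = map_poly ?h (char_poly (mat_delete N 0 0))"
    unfolding eval_minor[symmetric] by (rule poly_hom.char_poly_hom[OF minor_N])
  have dp: "pderiv (char_poly ?L) = map_poly ?h (pderiv p)"
    unfolding p by (rule poly_hom.map_poly_pderiv[symmetric])
  have deg: "degree (char_poly ?L) = n" "degree p = n"
    "degree (char_poly (mat_delete ?L 0 0)) = n - 1" "degree (char_poly (mat_delete N 0 0)) = n - 1"
    using degree_monic_char_poly[OF L] degree_monic_char_poly[OF N, folded p_def]
      degree_monic_char_poly[OF mat_delete_carrier[OF L]] degree_monic_char_poly[OF minor_N]
    by simp_all
  have "degree (map_poly ?h p) = degree p" using deg p by simp
  moreover have "degree (map_poly ?h (pderiv p)) = degree (pderiv p)"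
    unfolding dp[symmetric] using deg by (simp add: degree_pderiv)
  moreover have "degree (map_poly ?h (char_poly (mat_delete N 0 0))) = degree (char_poly (mat_delete N 0 0))"
    unfolding q[symmetric] using deg by simp
  ultimately show ?thesis
    unfolding generic_resultant_def dp q unfolding p p_def[symmetric]
    by (simp add: comm_ring_hom.resultant_map_poly[OF hom])
qed

lemma poly_nonroot_in_interval:
  fixes R :: "complex poly"
  assumes "R \<noteq> 0" and "a < b"
  obtains t where "a < t" "t < b" "poly R (of_real t) \<noteq> 0"
proof -
  have "infinite (complex_of_real ` {a<..<b})"
    using infinite_Ioo[OF \<open>a < b\<close>] finite_imageD inj_on_def by (metis of_real_eq_iff)
  moreover have "finite {x. poly R x = 0}" by (rule poly_roots_finite[OF \<open>R \<noteq> 0\<close>])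
  ultimately have "\<not> complex_of_real ` {a<..<b} \<subseteq> {x. poly R x = 0}" using finite_subset by blast
  then obtain t where "t \<in> {a<..<b}" "poly R (of_real t) \<noteq> 0" by (auto simp: image_subset_iff)
  then show thesis by (intro that) auto
qed

lemma spectrally_generic_dense:
  fixes M :: "complex mat"
  assumes M: "M \<in> carrier_mat n n" and sym: "\<And>i j. i < n \<Longrightarrow> j < n \<Longrightarrow> M $$ (i,j) = M $$ (j,i)"
    and e: "0 < e"
  obtains B where "B \<in> carrier_mat n n" "\<And>i j. i < n \<Longrightarrow> j < n \<Longrightarrow> B $$ (i,j) = B $$ (j,i)"
    "spectrally_generic B" "(\<Sum>i<n. \<Sum>j<n. cmod (B $$ (i,j) - M $$ (i,j))) < e"
proof -
  obtain C where C: "C \<in> carrier_mat n n" and C_sym: "\<And>i j. i < n \<Longrightarrow> j < n \<Longrightarrow> C $$ (i,j) = C $$ (j,i)"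
    and "spectrally_generic C"
    using exists_spectrally_generic_symmetric[where n = n] by blast
  define R where "R = generic_resultant (mat n n (\<lambda>(i,j). [:M $$ (i,j), C $$ (i,j) - M $$ (i,j):]))"
  have R: "poly R s \<noteq> 0 \<longleftrightarrow> spectrally_generic (M + s \<cdot>\<^sub>m (C - M))" for s
  proof -
    have "map_mat (\<lambda>q. poly q s) (mat n n (\<lambda>(i,j). [:M $$ (i,j), C $$ (i,j) - M $$ (i,j):]))
        = M + s \<cdot>\<^sub>m (C - M)"
      using C M by (intro eq_matI) auto
    then show ?thesis unfolding R_def spectrally_generic_def by (simp add: poly_generic_resultant[of _ n])
  qed
  have "M + 1 \<cdot>\<^sub>m (C - M) = C" using C M by (intro eq_matI) auto
  then have "R \<noteq> 0" using R[of 1] \<open>spectrally_generic C\<close> by auto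
  define T where "T = (\<Sum>i<n. \<Sum>j<n. cmod (C $$ (i,j) - M $$ (i,j)))"
  have "0 \<le> T" unfolding T_def by (intro sum_nonneg) auto
  then have "0 < e / (T + 1)" using e by simp
  then obtain t where t: "0 < t" "t < e / (T + 1)" and nonroot: "poly R (of_real t) \<noteq> 0"
    by (rule poly_nonroot_in_interval[OF \<open>R \<noteq> 0\<close>])
  define B where "B = M + of_real t \<cdot>\<^sub>m (C - M)"
  have "B \<in> carrier_mat n n" using M by (simp add: B_def minus_carrier_mat)
  moreover have "B $$ (i,j) = B $$ (j,i)" if "i < n" "j < n" for i j
    using that C M sym C_sym by (simp add: B_def)
  moreover have "spectrally_generic B" using R nonroot by (simp add: B_def)
  moreover have "(\<Sum>i<n. \<Sum>j<n. cmod (B $$ (i,j) - M $$ (i,j))) < e"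
  proof -
    have "(\<Sum>i<n. \<Sum>j<n. cmod (B $$ (i,j) - M $$ (i,j))) = t * T"
      using t(1) C M by (simp add: B_def T_def sum_distrib_left norm_mult)
    also have "\<dots> \<le> t * (T + 1)" using t(1) by simp
    also have "\<dots> < e" using t(2) \<open>0 \<le> T\<close> by (simp add: pos_less_divide_eq)
    finally show ?thesis .
  qed
  ultimately show thesis by (rule that)
qed

lemma symmetric_approx_by_spectral_sum:
  fixes M :: "complex mat"
  assumes M: "M \<in> carrier_mat n n" and sym: "\<And>i j. i < n \<Longrightarrow> j < n \<Longrightarrow> M $$ (i,j) = M $$ (j,i)"
    and e: "0 < e"
  obtains P lam where "orthogonal_fun n P" "\<And>l. l < n \<Longrightarrow> P l 0 \<noteq> 0"
    "(\<Sum>i<n. \<Sum>j<n. cmod (spectral_sum n lam P i j - M $$ (i,j))) < e"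
proof -
  obtain B where B: "B \<in> carrier_mat n n" "\<And>i j. i < n \<Longrightarrow> j < n \<Longrightarrow> B $$ (i,j) = B $$ (j,i)"
    "spectrally_generic B" and close: "(\<Sum>i<n. \<Sum>j<n. cmod (B $$ (i,j) - M $$ (i,j))) < e"
    using spectrally_generic_dense[OF M sym e] by blast
  obtain P lam where P: "orthogonal_fun n P" "\<And>l. l < n \<Longrightarrow> P l 0 \<noteq> 0"
    and B_eq: "\<And>i j. i < n \<Longrightarrow> j < n \<Longrightarrow> B $$ (i,j) = spectral_sum n lam P i j"
    using spectrally_generic_orthogonal_diagonalization[OF B] by blast
  have "(\<Sum>i<n. \<Sum>j<n. cmod (spectral_sum n lam P i j - M $$ (i,j)))
      = (\<Sum>i<n. \<Sum>j<n. cmod (B $$ (i,j) - M $$ (i,j)))"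
    using B_eq by simp
  with close have "(\<Sum>i<n. \<Sum>j<n. cmod (spectral_sum n lam P i j - M $$ (i,j))) < e" by simp
  with P show thesis by (rule that)
qed

section \<open>First slices of orthogonally decomposable tensors\<close>

lemma sum_cube:
  fixes f :: "'a \<Rightarrow> 'b::comm_semiring_1"
  shows "(\<Sum>i\<in>U. f i) ^ 3 = (\<Sum>i\<in>U. \<Sum>j\<in>U. \<Sum>k\<in>U. f i * f j * f k)"
proof -
  have "(\<Sum>i\<in>U. f i) ^ 3 = (\<Sum>i\<in>U. f i) * ((\<Sum>j\<in>U. f j) * (\<Sum>k\<in>U. f k))"
    by (simp add: power3_eq_cube mult.assoc)
  also have "\<dots> = (\<Sum>i\<in>U. \<Sum>j\<in>U. f i * (\<Sum>k\<in>U. f j * f k))"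
    by (simp only: sum_product)
  also have "\<dots> = (\<Sum>i\<in>U. \<Sum>j\<in>U. \<Sum>k\<in>U. f i * f j * f k)"
    by (simp add: sum_distrib_left mult.assoc)
  finally show ?thesis .
qed

lemma sum_swap_innermost3:
  "(\<Sum>i\<in>A. \<Sum>j\<in>A. \<Sum>k\<in>A. \<Sum>l\<in>B. f i j k l) = (\<Sum>l\<in>B. \<Sum>i\<in>A. \<Sum>j\<in>A. \<Sum>k\<in>A. f i j k l)"
proof -
  have "(\<Sum>i\<in>A. \<Sum>j\<in>A. \<Sum>k\<in>A. \<Sum>l\<in>B. f i j k l) = (\<Sum>i\<in>A. \<Sum>j\<in>A. \<Sum>l\<in>B. \<Sum>k\<in>A. f i j k l)"
    by (intro sum.cong refl sum.swap)
  also have "\<dots> = (\<Sum>i\<in>A. \<Sum>l\<in>B. \<Sum>j\<in>A. \<Sum>k\<in>A. f i j k l)"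
    by (intro sum.cong refl sum.swap)
  also have "\<dots> = (\<Sum>l\<in>B. \<Sum>i\<in>A. \<Sum>j\<in>A. \<Sum>k\<in>A. f i j k l)"
    by (rule sum.swap)
  finally show ?thesis .
qed

lemma sum_of_cubes_in_OW:
  fixes A :: "complex ^ 'n ^ 'n" and \<beta> :: "'n \<Rightarrow> complex"
  assumes A: "transpose A ** A = Finite_Cartesian_Product.mat 1"
  shows "(\<chi> i j k. \<Sum>l\<in>UNIV. \<beta> l * A $ l $ i * A $ l $ j * A $ l $ k) \<in> OW"
proof -
  define S :: "complex ^ 'n ^ 'n ^ 'n" where "S = (\<chi> i j k. \<Sum>l\<in>UNIV. \<beta> l * A $ l $ i * A $ l $ j * A $ l $ k)"
  have "S \<in> OW"
    unfolding OW_def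
  proof (intro CollectI conjI exI[of _ A] exI[of _ \<beta>] allI)
    show "symmetric_tensor S" unfolding symmetric_tensor_def S_def by (simp add: mult_ac)
    show "transpose A ** A = Finite_Cartesian_Product.mat 1" by (rule A)
    fix x :: "complex ^ 'n"
    have "cubic_form S x = (\<Sum>i\<in>UNIV. \<Sum>j\<in>UNIV. \<Sum>k\<in>UNIV. \<Sum>l\<in>UNIV.
            \<beta> l * ((A $ l $ i * x $ i) * (A $ l $ j * x $ j) * (A $ l $ k * x $ k)))"
      unfolding cubic_form_def S_def by (simp add: sum_distrib_right sum_distrib_left mult_ac)
    also have "\<dots> = (\<Sum>l\<in>UNIV. \<Sum>i\<in>UNIV. \<Sum>j\<in>UNIV. \<Sum>k\<in>UNIV.
            \<beta> l * ((A $ l $ i * x $ i) * (A $ l $ j * x $ j) * (A $ l $ k * x $ k)))"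
      by (rule sum_swap_innermost3)
    also have "\<dots> = (\<Sum>l\<in>UNIV. \<beta> l * ((A *v x) $ l) ^ 3)"
      by (simp add: matrix_vector_mult_def sum_cube sum_distrib_left)
    finally show "cubic_form S x = (\<Sum>l\<in>UNIV. \<beta> l * ((A *v x) $ l) ^ 3)" .
  qed
  then show ?thesis by (simp add: S_def)
qed

lemma spectral_matrix_in_first_slices:
  fixes A :: "complex ^ ('n::{finite,wellorder}) ^ ('n::{finite,wellorder})" and lam :: "'n \<Rightarrow> complex"
  assumes A: "transpose A ** A = Finite_Cartesian_Product.mat 1"
    and first: "\<And>l :: 'n::{finite,wellorder}. A $ l $ (LEAST k. True) \<noteq> 0"
  shows "(\<chi> i j. \<Sum>l\<in>UNIV. lam l * A $ l $ i * A $ l $ j) \<in> first_slice ` OW"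
proof -
  define \<beta> where "\<beta> l = lam l / A $ l $ (LEAST k. True)" for l
  define S where "S = (\<chi> i j k. \<Sum>l\<in>UNIV. \<beta> l * A $ l $ i * A $ l $ j * A $ l $ k)"
  have "S \<in> OW" unfolding S_def by (rule sum_of_cubes_in_OW[OF A])
  moreover have "first_slice S = (\<chi> i j. \<Sum>l\<in>UNIV. lam l * A $ l $ i * A $ l $ j)"
    using first by (simp add: first_slice_def S_def \<beta>_def)
  ultimately show ?thesis by (metis image_eqI)
qed

lemma orthogonal_fun_reindex:
  fixes P :: "nat \<Rightarrow> nat \<Rightarrow> 'a::comm_ring_1" and ix :: "'n::finite \<Rightarrow> nat"
  assumes ix: "bij_betw ix UNIV {..<CARD('n)}" and P: "orthogonal_fun CARD('n) P"
  shows "transpose (\<chi> l i. P (ix l) (ix i)) ** (\<chi> l i. P (ix l) (ix i)) = Finite_Cartesian_Product.mat 1"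
proof -
  have ix_lt: "ix a < CARD('n)" for a using ix by (auto simp: bij_betw_def)
  have ix_eq: "ix a = ix b \<longleftrightarrow> a = b" for a b using ix by (auto simp: bij_betw_def inj_on_def)
  have "(transpose (\<chi> l i. P (ix l) (ix i)) ** (\<chi> l i. P (ix l) (ix i))) $ i $ j
      = Finite_Cartesian_Product.mat 1 $ i $ j" for i j :: "'n::finite"
  proof -
    have "(transpose (\<chi> l i. P (ix l) (ix i)) ** (\<chi> l i. P (ix l) (ix i))) $ i $ j
        = (\<Sum>k<CARD('n). P k (ix i) * P k (ix j))"
      using sum.reindex_bij_betw[OF ix, of "\<lambda>k. P k (ix i) * P k (ix j)"]
      by (simp add: matrix_matrix_mult_def transpose_def)
    also have "\<dots> = (if i = j then 1 else 0)"
      using P ix_lt ix_eq by (simp add: orthogonal_fun_def)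
    finally show ?thesis by (simp add: Finite_Cartesian_Product.mat_def)
  qed
  then show ?thesis by (simp add: Finite_Cartesian_Product.vec_eq_iff)
qed

lemma exists_rank_enumeration:
  obtains ix :: "'n::{finite,wellorder} \<Rightarrow> nat"
  where "bij_betw ix UNIV {..<CARD('n)}" "ix (LEAST k. True) = 0"
proof -
  define ix :: "'n \<Rightarrow> nat" where "ix a = card {b. b < a}" for a
  have mono: "ix a < ix a'" if "a < a'" for a a'
    unfolding ix_def using that by (intro psubset_card_mono) auto
  have "inj ix"
    by (rule injI) (metis less_irrefl linorder_neqE mono)
  moreover have "ix ` UNIV \<subseteq> {..<CARD('n)}"
    unfolding ix_def by (auto intro!: psubset_card_mono)
  moreover have "card (ix ` UNIV) = card {..<CARD('n)}"
    using card_image[OF \<open>inj ix\<close>] by simp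
  ultimately have "bij_betw ix UNIV {..<CARD('n)}"
    by (simp add: bij_betw_def card_subset_eq)
  moreover have "\<not> b < (LEAST k :: 'n. True)" for b
    using not_less_Least[of b "\<lambda>_. True"] by blast
  then have "ix (LEAST k. True) = 0" unfolding ix_def by simp
  ultimately show thesis by (rule that)
qed

lemma norm_le_sum_norm_entries:
  fixes X :: "'a::real_normed_vector ^ 'n ^ 'm"
  shows "norm X \<le> (\<Sum>i\<in>UNIV. \<Sum>j\<in>UNIV. norm ((X $ i) $ j))"
proof -
  have row: "norm x \<le> (\<Sum>i\<in>UNIV. norm (x $ i))" for x :: "'b::real_normed_vector ^ 'k"
    unfolding norm_vec_def by (rule L2_set_le_sum) simp
  have "norm X \<le> (\<Sum>i\<in>UNIV. norm (X $ i))" by (rule row)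
  also have "\<dots> \<le> (\<Sum>i\<in>UNIV. \<Sum>j\<in>UNIV. norm ((X $ i) $ j))" by (intro sum_mono row)
  finally show ?thesis .
qed

lemma dist_le_sum_reindex:
  fixes X Y :: "complex ^ 'n::finite ^ 'n" and ix :: "'n \<Rightarrow> nat"
  assumes ix: "bij_betw ix UNIV {..<CARD('n)}"
    and X: "\<And>i j. X $ i $ j = F (ix i) (ix j)" and Y: "\<And>i j. Y $ i $ j = G (ix i) (ix j)"
  shows "dist X Y \<le> (\<Sum>i<CARD('n). \<Sum>j<CARD('n). cmod (F i j - G i j))"
proof -
  have inner: "(\<Sum>j\<in>UNIV. cmod (F k (ix j) - G k (ix j))) = (\<Sum>j<CARD('n). cmod (F k j - G k j))" for k
    by (rule sum.reindex_bij_betw[OF ix, of "\<lambda>j. cmod (F k j - G k j)"])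
  have "dist X Y \<le> (\<Sum>i\<in>UNIV. \<Sum>j\<in>UNIV. norm (((X - Y) $ i) $ j))"
    unfolding dist_norm by (rule norm_le_sum_norm_entries)
  also have "\<dots> = (\<Sum>i<CARD('n). \<Sum>j<CARD('n). cmod (F i j - G i j))"
    unfolding vector_minus_component X Y inner
    by (rule sum.reindex_bij_betw[OF ix, of "\<lambda>k. \<Sum>j<CARD('n). cmod (F k j - G k j)"])
  finally show ?thesis .
qed

lemma symmetric_approx_by_spectral_matrix:
  fixes M :: "complex ^ ('n::{finite,wellorder}) ^ ('n::{finite,wellorder})"
  assumes sym: "transpose M = M" and e: "0 < e"
  obtains A :: "complex ^ ('n::{finite,wellorder}) ^ ('n::{finite,wellorder})"
    and lam :: "('n::{finite,wellorder}) \<Rightarrow> complex"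
  where "transpose A ** A = Finite_Cartesian_Product.mat 1"
    "\<And>l :: 'n::{finite,wellorder}. A $ l $ (LEAST k. True) \<noteq> 0"
    "dist (\<chi> i j. \<Sum>l\<in>UNIV. lam l * A $ l $ i * A $ l $ j) M < e"
proof -
  obtain ix :: "'n \<Rightarrow> nat" where ix: "bij_betw ix UNIV {..<CARD('n)}" "ix (LEAST k. True) = 0"
    using exists_rank_enumeration by blast
  define n where "n = CARD('n)"
  have ix_lt: "ix a < n" for a using ix(1) by (auto simp: n_def bij_betw_def)
  define MJ where "MJ = mat n n (\<lambda>(i,j). M $ inv_into UNIV ix i $ inv_into UNIV ix j)"
  have MJ: "MJ \<in> carrier_mat n n" by (simp add: MJ_def)
  have "M $ i $ j = M $ j $ i" for i j :: "'n::{finite,wellorder}"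
    using sym by (metis transpose_def vec_lambda_beta)
  then have MJ_sym: "MJ $$ (i,j) = MJ $$ (j,i)" if "i < n" "j < n" for i j
    using that by (simp add: MJ_def)
  obtain P lam where P: "orthogonal_fun n P" "\<And>l. l < n \<Longrightarrow> P l 0 \<noteq> 0"
    and close: "(\<Sum>i<n. \<Sum>j<n. cmod (spectral_sum n lam P i j - MJ $$ (i,j))) < e"
    using symmetric_approx_by_spectral_sum[OF MJ MJ_sym e] by blast
  define A :: "complex ^ ('n::{finite,wellorder}) ^ ('n::{finite,wellorder})"
    where "A = (\<chi> l i. P (ix l) (ix i))"
  have "transpose A ** A = Finite_Cartesian_Product.mat 1"
    unfolding A_def using orthogonal_fun_reindex[OF ix(1)] P(1) by (simp add: n_def)
  moreover have "A $ l $ (LEAST k. True) \<noteq> 0" for l :: "'n::{finite,wellorder}"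
    using P(2) ix ix_lt by (simp add: A_def)
  moreover have "dist (\<chi> i j. \<Sum>l\<in>UNIV. lam (ix l) * A $ l $ i * A $ l $ j) M
      \<le> (\<Sum>i<n. \<Sum>j<n. cmod (spectral_sum n lam P i j - MJ $$ (i,j)))" (is "?d \<le> _")
    unfolding n_def
  proof (rule dist_le_sum_reindex[OF ix(1)])
    show "(\<chi> i j. \<Sum>l\<in>UNIV. lam (ix l) * A $ l $ i * A $ l $ j) $ i $ j
        = spectral_sum CARD('n) lam P (ix i) (ix j)" for i j :: "'n::{finite,wellorder}"
      using sum.reindex_bij_betw[OF ix(1), of "\<lambda>l. lam l * P l (ix i) * P l (ix j)"]
      by (simp add: A_def spectral_sum_def)
    show "M $ i $ j = MJ $$ (ix i, ix j)" for i j :: "'n::{finite,wellorder}"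
      using ix_lt by (simp add: MJ_def bij_betw_inv_into_left[OF ix(1)])
  qed
  with close have "?d < e" by simp
  ultimately show thesis by (rule that[of A "\<lambda>l. lam (ix l)"])
qed

theorem proposition14:
  shows "{M :: complex ^ ('n::{finite,wellorder}) ^ ('n::{finite,wellorder}). transpose M = M}
           \<subseteq> closure (first_slice ` (OW :: (complex ^ ('n::{finite,wellorder}) ^ ('n::{finite,wellorder}) ^ ('n::{finite,wellorder})) set))"
proof
  fix M :: "complex ^ ('n::{finite,wellorder}) ^ ('n::{finite,wellorder})"
  assume "M \<in> {M. transpose M = M}"
  then have sym: "transpose M = M" by simp
  show "M \<in> closure (first_slice ` OW)"
    unfolding closure_approachable
  proof (intro allI impI)
    fix e :: real
    assume "0 < e"
    then obtain A :: "complex ^ ('n::{finite,wellorder}) ^ ('n::{finite,wellorder})" and lam where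
      "transpose A ** A = Finite_Cartesian_Product.mat 1" "\<And>l :: 'n::{finite,wellorder}. A $ l $ (LEAST k. True) \<noteq> 0"
      and close: "dist (\<chi> i j. \<Sum>l\<in>UNIV. lam l * A $ l $ i * A $ l $ j) M < e"
      using symmetric_approx_by_spectral_matrix[OF sym] by blast
    then have "(\<chi> i j. \<Sum>l\<in>UNIV. lam l * A $ l $ i * A $ l $ j) \<in> first_slice ` OW"
      by (intro spectral_matrix_in_first_slices)
    with close show "\<exists>y\<in>first_slice ` OW. dist y M < e" by blast
  qed
qed

end
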